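(* Let $C$ be a family of completely positive (symmetric, real) tensors of orders $m\ge 2$ and dimensions $n\ge 2$ satisfying: (1) for all $m,n\ge 2$ there is at least one $m$th order $n$-dimensional tensor in $C$; (2) every matrix (order $m=2$) in $C$ is positive definite; (3) whenever $\mathcal{A}=(a_{i_1\dots i_m})\in C$ has order $m\ge 3$ and dimension $n$, the $(m-1)$th order $n$-dimensional sub-tensor $\mathcal{A}_1=(a_{1 i_2\dots i_m})$ obtained by fixing the first index $i_1=1$ also belongs to $C$. Then every tensor in $C$ is strongly completely positive, and every even order tensor in $C$ is positive definite.
   Context: For $\mathbf{u}\in\mathbb{R}^n$, $\mathbf{u}^m$ is the tensor with entries $u_{i_1}\cdots u_{i_m}$. A symmetric tensor $\mathcal{A}$ of order $m$ and dimension $n$ is completely positive if $\mathcal{A}=(\mathbf{u}^{(1)})^m+\dots+(\mathbf{u}^{(r)})^m$ for some nonnegative $\mathbf{u}^{(1)},\dots,\mathbf{u}^{(r)}\in\mathbb{R}^n$, and strongly completely positive if such a decomposition exists with $\{\mathbf{u}^{(1)},\dots,\mathbf{u}^{(r)}\}$ spanning $\mathbb{R}^n$. For even $m$, $\mathcal{A}$ is positive definite if $\sum_{i_1,\dots,i_m}a_{i_1\dots i_m}x_{i_1}\cdots x_{i_m}>0$ for all nonzero $\mathbf{x}\in\mathbb{R}^n$. *)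

theory Defs
  imports Complex_Main "HOL-Combinatorics.Permutations"
begin

text \<open>Tensors of order m and dimension n are represented as functions
  nat list \<Rightarrow> real, where only index lists of length m with entries < n
  (0-based indices) are meaningful. Real vectors in R^n are functions
  nat \<Rightarrow> real, only coordinates < n being meaningful.\<close>

definition tidx :: "nat \<Rightarrow> nat \<Rightarrow> nat list set" where
  "tidx m n = {is. length is = m \<and> set is \<subseteq> {..<n}}"

definition sym_tensor :: "nat \<Rightarrow> nat \<Rightarrow> (nat list \<Rightarrow> real) \<Rightarrow> bool" where
  "sym_tensor m n A \<longleftrightarrow>
     (\<forall>is\<in>tidx m n. \<forall>js\<in>tidx m n. (\<exists>p. p permutes {..<m} \<and> js = map (\<lambda>k. is ! p k) [0..<m]) \<longrightarrow> A is = A js)"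

definition tpow :: "(nat \<Rightarrow> real) \<Rightarrow> nat list \<Rightarrow> real" where
  "tpow u is = prod_list (map u is)"

definition nonneg_vec :: "nat \<Rightarrow> (nat \<Rightarrow> real) \<Rightarrow> bool" where
  "nonneg_vec n u \<longleftrightarrow> (\<forall>i<n. 0 \<le> u i)"

definition is_decomp :: "nat \<Rightarrow> nat \<Rightarrow> (nat list \<Rightarrow> real) \<Rightarrow> (nat \<Rightarrow> real) list \<Rightarrow> bool" where
  "is_decomp m n A us \<longleftrightarrow>
     (\<forall>u\<in>set us. nonneg_vec n u) \<and>
     (\<forall>is\<in>tidx m n. A is = (\<Sum>u\<leftarrow>us. tpow u is))"

definition spans_Rn :: "nat \<Rightarrow> (nat \<Rightarrow> real) list \<Rightarrow> bool" where
  "spans_Rn n us \<longleftrightarrow>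
     (\<forall>x :: nat \<Rightarrow> real. \<exists>c :: nat \<Rightarrow> real.
        \<forall>i<n. x i = (\<Sum>k<length us. c k * (us ! k) i))"

definition completely_positive :: "nat \<Rightarrow> nat \<Rightarrow> (nat list \<Rightarrow> real) \<Rightarrow> bool" where
  "completely_positive m n A \<longleftrightarrow> sym_tensor m n A \<and> (\<exists>us. is_decomp m n A us)"

definition strongly_completely_positive :: "nat \<Rightarrow> nat \<Rightarrow> (nat list \<Rightarrow> real) \<Rightarrow> bool" where
  "strongly_completely_positive m n A \<longleftrightarrow>
     sym_tensor m n A \<and> (\<exists>us. is_decomp m n A us \<and> spans_Rn n us)"

definition pos_def_tensor :: "nat \<Rightarrow> nat \<Rightarrow> (nat list \<Rightarrow> real) \<Rightarrow> bool" where
  "pos_def_tensor m n A \<longleftrightarrow>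
     (\<forall>x :: nat \<Rightarrow> real. (\<exists>i<n. x i \<noteq> 0) \<longrightarrow>
        0 < (\<Sum>is\<in>tidx m n. A is * prod_list (map x is)))"

end

theory Submission
  imports Defs "Jordan_Normal_Form.Determinant"
begin

(* Write A = \<Sum>_u u^m. Fixing the first m - 2 indices of A to the first coordinate
   leaves the matrix \<Sum>_u (u_1)^(m-2) u u^T, whose quadratic form at x is
   \<Sum>_u (u_1)^(m-2) (u.x)^2. By (3) this matrix lies in C, so by (2) it is positive definite;
   hence no nonzero x is orthogonal to all u, i.e. the u span R^n, and for even m the form
   A x^m = \<Sum>_u (u.x)^m is a sum of nonnegative terms one of which is positive. *)

lemma sum_list_nonzero_imp_nonzero_term:
  "(\<Sum>u\<leftarrow>us. f u) \<noteq> (0::'b::monoid_add) \<Longrightarrow> \<exists>u\<in>set us. f u \<noteq> 0"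
  by (induction us) auto

lemma sum_list_even_powers_pos:
  fixes f :: "'a \<Rightarrow> real"
  assumes "even m" "u \<in> set us" "f u \<noteq> 0"
  shows "0 < (\<Sum>u\<leftarrow>us. f u ^ m)"
proof -
  have "0 < f u ^ m"
    using assms by (simp add: zero_less_power_eq)
  also have "\<dots> \<le> (\<Sum>u\<leftarrow>us. f u ^ m)"
    using assms by (intro member_le_sum_list) (auto simp: zero_le_even_power)
  finally show ?thesis .
qed

lemma gram_quadratic_form:
  fixes v :: "nat \<Rightarrow> nat \<Rightarrow> real" and y :: "nat \<Rightarrow> real"
  shows "(\<Sum>i<n. y i * (\<Sum>j<n. (\<Sum>k<r. v k i * v k j) * y j))
       = (\<Sum>k<r. (\<Sum>i<n. v k i * y i)^2)"
proof -
  have "(\<Sum>i<n. y i * (\<Sum>j<n. (\<Sum>k<r. v k i * v k j) * y j))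
      = (\<Sum>i<n. \<Sum>j<n. \<Sum>k<r. (v k i * y i) * (v k j * y j))"
    by (simp add: sum_distrib_left sum_distrib_right mult_ac)
  also have "\<dots> = (\<Sum>k<r. \<Sum>i<n. \<Sum>j<n. (v k i * y i) * (v k j * y j))"
    by (simp add: sum.swap[where A="{..<r}"])
  also have "\<dots> = (\<Sum>k<r. (\<Sum>i<n. v k i * y i)^2)"
    by (simp add: power2_eq_square sum_product)
  finally show ?thesis .
qed

(* By the hypothesis the Gram matrix G = \<Sum>_k v_k v_k^T is positive definite, hence
   invertible, and x = G y = \<Sum>_k (v_k.y) v_k. *)
lemma spans_Rn_if_trivial_annihilator:
  assumes annihilator: "\<And>x. (\<exists>i<n. x i \<noteq> 0) \<Longrightarrow> \<exists>u\<in>set us. (\<Sum>i<n. u i * x i) \<noteq> 0"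
  shows "spans_Rn n us"
  unfolding spans_Rn_def
proof
  fix x :: "nat \<Rightarrow> real"
  define r where "r = length us"
  define v where "v k = us ! k" for k
  define G where "G = mat n n (\<lambda>(i,j). \<Sum>k<r. v k i * v k j)"
  have G_carrier: "G \<in> carrier_mat n n" unfolding G_def by simp
  have G_mult: "(G *\<^sub>v y) $ i = (\<Sum>j<n. (\<Sum>k<r. v k i * v k j) * y $ j)"
    if "i < n" "y \<in> carrier_vec n" for i y
    using that unfolding G_def by (simp add: scalar_prod_def lessThan_atLeast0 row_def)
  have "det G \<noteq> 0"
  proof
    assume "det G = 0"
    then obtain y where y: "y \<in> carrier_vec n" "y \<noteq> 0\<^sub>v n" "G *\<^sub>v y = 0\<^sub>v n"
      using det_0_iff_vec_prod_zero[OF G_carrier] by auto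
    have "\<exists>i<n. y $ i \<noteq> 0"
      using y(1,2) by (metis eq_vecI index_zero_vec(1,2) carrier_vecD)
    then obtain k where k: "k < r" "(\<Sum>i<n. v k i * y $ i) \<noteq> 0"
      using annihilator[of "\<lambda>i. y $ i"] unfolding r_def v_def by (auto simp: in_set_conv_nth)
    have "0 < (\<Sum>k<r. (\<Sum>i<n. v k i * y $ i)^2)"
      using k by (intro sum_pos2[of _ k]) auto
    also have "\<dots> = (\<Sum>i<n. y $ i * (G *\<^sub>v y) $ i)"
      using gram_quadratic_form[where y="\<lambda>i. y $ i" and n=n and v=v and r=r] G_mult[OF _ y(1)]
      by simp
    also have "\<dots> = 0" using y(3) by simp
    finally show False by simp
  qed
  then have "G \<in> Units (ring_mat TYPE(real) n ())"
    by (rule det_non_zero_imp_unit[OF G_carrier])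
  then obtain B where B: "B \<in> carrier_mat n n" "G * B = 1\<^sub>m n"
    unfolding Units_def ring_mat_def by auto
  define y where "y = B *\<^sub>v vec n x"
  have y_carrier: "y \<in> carrier_vec n" unfolding y_def using B by simp
  have G_y: "G *\<^sub>v y = vec n x"
    unfolding y_def using B G_carrier by (metis assoc_mult_mat_vec one_mult_mat_vec vec_carrier)
  show "\<exists>c. \<forall>i<n. x i = (\<Sum>k<length us. c k * (us ! k) i)"
  proof (intro exI allI impI)
    fix i assume i: "i < n"
    have "x i = (G *\<^sub>v y) $ i" using G_y i by simp
    also have "\<dots> = (\<Sum>j<n. (\<Sum>k<r. v k i * v k j) * y $ j)" using G_mult[OF i y_carrier] .
    also have "\<dots> = (\<Sum>k<r. (\<Sum>j<n. v k j * y $ j) * v k i)"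
      by (simp add: sum_distrib_left sum_distrib_right sum.swap[where A="{..<n}"] mult_ac)
    finally show "x i = (\<Sum>k<length us. (\<Sum>j<n. v k j * y $ j) * (us ! k) i)"
      unfolding r_def v_def .
  qed
qed

lemma tidx_Suc: "tidx (Suc m) n = (\<lambda>(i, is). i # is) ` ({..<n} \<times> tidx m n)"
  unfolding tidx_def by (auto simp: length_Suc_conv image_iff)

lemma replicate_append_in_tidx:
  "0 < n \<Longrightarrow> is \<in> tidx j n \<Longrightarrow> replicate k 0 @ is \<in> tidx (k + j) n"
  unfolding tidx_def by auto

lemma sum_tidx_tpow:
  fixes u x :: "nat \<Rightarrow> real"
  shows "(\<Sum>is\<in>tidx m n. tpow u is * prod_list (map x is)) = (\<Sum>i<n. u i * x i) ^ m"
proof (induction m)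
  case 0
  have "tidx 0 n = {[]}" unfolding tidx_def by auto
  then show ?case by (simp add: tpow_def)
next
  case (Suc m)
  have "inj_on (\<lambda>(i, is). i # is) ({..<n} \<times> tidx m n)"
    by (auto simp: inj_on_def)
  then have "(\<Sum>is\<in>tidx (Suc m) n. tpow u is * prod_list (map x is))
      = (\<Sum>i<n. \<Sum>is\<in>tidx m n. (u i * x i) * (tpow u is * prod_list (map x is)))"
    unfolding tidx_Suc
    by (subst sum.reindex) (simp_all add: sum.cartesian_product case_prod_beta tpow_def mult_ac)
  also have "\<dots> = (\<Sum>i<n. u i * x i) ^ Suc m"
    by (simp add: sum_distrib_left[symmetric] Suc sum_distrib_right)
  finally show ?case .
qed

lemma decomp_replicate_zero_append:
  assumes "is_decomp (k + j) n A us" "0 < n" "is \<in> tidx j n"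
  shows "A (replicate k 0 @ is) = (\<Sum>u\<leftarrow>us. u 0 ^ k * tpow u is)"
  using assms replicate_append_in_tidx[OF assms(2,3)]
  unfolding is_decomp_def by (simp add: tpow_def)

lemma sum_tidx_replicate_zero_append:
  fixes x :: "nat \<Rightarrow> real"
  assumes "is_decomp (k + j) n A us" "0 < n"
  shows "(\<Sum>is\<in>tidx j n. A (replicate k 0 @ is) * prod_list (map x is))
       = (\<Sum>u\<leftarrow>us. u 0 ^ k * (\<Sum>i<n. u i * x i) ^ j)"
proof -
  have "(\<Sum>is\<in>tidx j n. A (replicate k 0 @ is) * prod_list (map x is))
      = (\<Sum>is\<in>tidx j n. \<Sum>u\<leftarrow>us. u 0 ^ k * (tpow u is * prod_list (map x is)))"
    using decomp_replicate_zero_append[OF assms]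
    by (simp add: sum_list_const_mult[symmetric] sum_list_mult_const[symmetric] mult_ac)
  also have "\<dots> = (\<Sum>u\<leftarrow>us. u 0 ^ k * (\<Sum>i<n. u i * x i) ^ j)"
    by (simp add: sum_list_sum_nth sum.swap[where A="tidx j n"] sum_distrib_left[symmetric]
        sum_tidx_tpow)
  finally show ?thesis .
qed

lemma trivial_annihilator_if_slice_pos_def:
  assumes dec: "is_decomp (k + 2) n A us" and "0 < n"
    and pd: "pos_def_tensor 2 n (\<lambda>is. A (replicate k 0 @ is))"
    and x: "\<exists>i<n. x i \<noteq> 0"
  shows "\<exists>u\<in>set us. (\<Sum>i<n. u i * x i) \<noteq> 0"
proof -
  have "0 < (\<Sum>is\<in>tidx 2 n. A (replicate k 0 @ is) * prod_list (map x is))"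
    using pd x unfolding pos_def_tensor_def by blast
  also have "\<dots> = (\<Sum>u\<leftarrow>us. u 0 ^ k * (\<Sum>i<n. u i * x i) ^ 2)"
    by (rule sum_tidx_replicate_zero_append[OF dec \<open>0 < n\<close>])
  finally have "(\<Sum>u\<leftarrow>us. u 0 ^ k * (\<Sum>i<n. u i * x i) ^ 2) \<noteq> 0"
    by simp
  then show ?thesis
    using sum_list_nonzero_imp_nonzero_term by fastforce
qed

lemma pos_def_tensor_if_trivial_annihilator:
  assumes "even m" and dec: "is_decomp m n A us" and "0 < n"
    and annihilator: "\<And>x. (\<exists>i<n. x i \<noteq> 0) \<Longrightarrow> \<exists>u\<in>set us. (\<Sum>i<n. u i * x i) \<noteq> 0"
  shows "pos_def_tensor m n A"
  unfolding pos_def_tensor_def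
proof (intro allI impI)
  fix x :: "nat \<Rightarrow> real" assume "\<exists>i<n. x i \<noteq> 0"
  then obtain u where "u \<in> set us" "(\<Sum>i<n. u i * x i) \<noteq> 0"
    using annihilator by blast
  with \<open>even m\<close> have "0 < (\<Sum>v\<leftarrow>us. (\<Sum>i<n. v i * x i) ^ m)"
    by (rule sum_list_even_powers_pos[where f="\<lambda>v. \<Sum>i<n. v i * x i"])
  also have "\<dots> = (\<Sum>is\<in>tidx m n. A is * prod_list (map x is))"
    using sum_tidx_replicate_zero_append[of 0 m n A us x] dec \<open>0 < n\<close> by simp
  finally show "0 < (\<Sum>is\<in>tidx m n. A is * prod_list (map x is))" .
qed

lemma matrix_slice_in_family:
  assumes sub: "\<And>m n A. (m, n, A) \<in> C \<Longrightarrow> 3 \<le> m \<Longrightarrow>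
                \<exists>B. (m - 1, n, B) \<in> C \<and> (\<forall>is\<in>tidx (m - 1) n. B is = A (0 # is))"
    and "0 < n"
  shows "2 \<le> m \<Longrightarrow> (m, n, A) \<in> C \<Longrightarrow>
    \<exists>M. (2, n, M) \<in> C \<and> (\<forall>is\<in>tidx 2 n. M is = A (replicate (m - 2) 0 @ is))"
proof (induction m arbitrary: A rule: nat_induct_at_least)
  case base
  then show ?case by auto
next
  case (Suc m)
  obtain B where B: "(m, n, B) \<in> C" "\<forall>is\<in>tidx m n. B is = A (0 # is)"
    using sub[OF Suc.prems(1)] Suc.hyps by auto
  obtain M where M: "(2, n, M) \<in> C" "\<forall>is\<in>tidx 2 n. M is = B (replicate (m - 2) 0 @ is)"
    using Suc.IH[OF B(1)] by auto
  have "replicate (m - 2) 0 @ is \<in> tidx m n" if "is \<in> tidx 2 n" for "is"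
    using replicate_append_in_tidx[OF \<open>0 < n\<close> that, of "m - 2"]
    by (simp only: le_add_diff_inverse2[OF Suc.hyps])
  moreover have "replicate (Suc m - 2) 0 = 0 # replicate (m - 2) (0::nat)"
    by (simp only: Suc_diff_le[OF Suc.hyps] replicate_Suc)
  ultimately show ?case using M B by (intro exI[of _ M]) auto
qed

theorem theorem4p1:
  fixes C :: "(nat \<times> nat \<times> (nat list \<Rightarrow> real)) set"
  assumes cp: "\<And>m n A. (m, n, A) \<in> C \<Longrightarrow> 2 \<le> m \<and> 2 \<le> n \<and> completely_positive m n A"
    and nonempty: "\<And>m n. 2 \<le> m \<Longrightarrow> 2 \<le> n \<Longrightarrow> \<exists>A. (m, n, A) \<in> C"
    and matrix_pd: "\<And>n A. (2, n, A) \<in> C \<Longrightarrow> pos_def_tensor 2 n A"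
    and sub: "\<And>m n A. (m, n, A) \<in> C \<Longrightarrow> 3 \<le> m \<Longrightarrow>
                \<exists>B. (m - 1, n, B) \<in> C \<and> (\<forall>is\<in>tidx (m - 1) n. B is = A (0 # is))"
  shows "\<forall>(m, n, A) \<in> C. strongly_completely_positive m n A \<and>
                          (even m \<longrightarrow> pos_def_tensor m n A)"
proof clarify
  fix m n A assume mnA: "(m, n, A) \<in> C"
  then have m: "2 \<le> m" and n: "0 < n" and "completely_positive m n A"
    using cp[OF mnA] by auto
  then obtain us where sym: "sym_tensor m n A" and dec: "is_decomp m n A us"
    unfolding completely_positive_def by auto
  obtain M where M_C: "(2, n, M) \<in> C" and M: "\<forall>is\<in>tidx 2 n. M is = A (replicate (m - 2) 0 @ is)"
    using matrix_slice_in_family[OF sub n m mnA] by auto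
  have "pos_def_tensor 2 n (\<lambda>is. A (replicate (m - 2) 0 @ is))"
    using matrix_pd[OF M_C] M unfolding pos_def_tensor_def by (simp cong: sum.cong)
  moreover have "is_decomp ((m - 2) + 2) n A us"
    using dec by (simp only: le_add_diff_inverse2[OF m])
  ultimately have annihilator: "\<exists>u\<in>set us. (\<Sum>i<n. u i * x i) \<noteq> 0" if "\<exists>i<n. x i \<noteq> 0" for x
    using trivial_annihilator_if_slice_pos_def n that by blast
  have "spans_Rn n us"
    using spans_Rn_if_trivial_annihilator[OF annihilator] .
  moreover have "even m \<Longrightarrow> pos_def_tensor m n A"
    using pos_def_tensor_if_trivial_annihilator[OF _ dec n annihilator] .
  ultimately show "strongly_completely_positive m n A \<and> (even m \<longrightarrow> pos_def_tensor m n A)"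
    using sym dec unfolding strongly_completely_positive_def by blast
qed

end
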